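(* Let $n \ge 2$. Let $\mathcal{W}_n$ be the set of weighted graphs on $n$ vertices with weights in $[0,1]$, identified with their weighted adjacency matrices, i.e. the set of $n\times n$ real symmetric matrices with all entries in $[0,1]$. Let $\mathcal{G}_n$ be the set of (unweighted, simple) graphs on $n$ vertices. Then \[ \min_{G \in \mathcal{G}_n} \lambda_{n-1}(G) - 2\sqrt{n} \le \inf_{G\in \mathcal{W}_n} \lambda_{n-1}(G). \]
   Context: For a real symmetric $n\times n$ matrix $M$ (in particular the adjacency matrix of a graph or weighted graph), $\lambda_k(M)$ denotes its $k$-th largest eigenvalue, counted with multiplicity, so $\lambda_1 \ge \lambda_2 \ge \dots \ge \lambda_n$. Weighted graphs may have loops (diagonal entries in $[0,1]$). *)

theory Defs
  imports "Jordan_Normal_Form.Char_Poly" "HOL-Computational_Algebra.Polynomial"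
begin

text \<open>Eigenvalues of a square real matrix, counted with multiplicity, are the roots
  of its characteristic polynomial (with multiplicity).  For a real symmetric matrix
  the characteristic polynomial splits over the reals, so this multiset has exactly
  n elements.\<close>
definition eigenvalues_desc :: "real mat \<Rightarrow> real list" where
  "eigenvalues_desc A = rev (sorted_list_of_multiset (proots (char_poly A)))"

text \<open>k-th largest eigenvalue (1-based): lambda_1 >= lambda_2 >= ... >= lambda_n.\<close>
definition lambda_k :: "real mat \<Rightarrow> nat \<Rightarrow> real" where
  "lambda_k A k = eigenvalues_desc A ! (k - 1)"

definition weighted_graphs :: "nat \<Rightarrow> real mat set" where
  "weighted_graphs n = {A. A \<in> carrier_mat n n \<and> A\<^sup>T = A \<and>
      (\<forall>i<n. \<forall>j<n. 0 \<le> A $$ (i,j) \<and> A $$ (i,j) \<le> 1)}"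

definition simple_graphs :: "nat \<Rightarrow> real mat set" where
  "simple_graphs n = {A. A \<in> carrier_mat n n \<and> A\<^sup>T = A \<and>
      (\<forall>i<n. A $$ (i,i) = 0) \<and>
      (\<forall>i<n. \<forall>j<n. A $$ (i,j) = 0 \<or> A $$ (i,j) = 1)}"

end

theory Submission
  imports Defs "HOL-Analysis.Function_Topology"
begin

text \<open>Let W be a weighted graph and u, w orthonormal eigenvectors for its two smallest
  eigenvalues. The off-diagonal weights of W are a point of the box [0,1]^pairs satisfying
  the three linear equations fixing the bilinear form of this off-diagonal part at (u,u),
  (u,w) and (w,w);
  a basic solution of this system has at most three fractional coordinates. Rounding these
  down and deleting the loops (which only lowers the quadratic form, the diagonal being
  nonnegative) yields a simple graph G whose quadratic form on the plane span {u, w} exceeds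
  that of W by at most 3 |x|^2 \<le> 2 sqrt n |x|^2 (when n = 2 there is only one pair).
  By the Courant-Fischer characterisation, lambda_(n-1)(G) is at most the largest Rayleigh
  quotient of G on this plane, hence at most lambda_(n-1)(W) + 2 sqrt n.

  Courant-Fischer, and the identification of the variational eigenvalues with the roots of
  the characteristic polynomial, come from successively minimising the Rayleigh quotient on
  the orthogonal complement of the eigenvectors already found.\<close>

section \<open>Vectors and quadratic forms\<close>

text \<open>Vectors of R^n are modelled as functions \<open>nat \<Rightarrow> real\<close> of which only the coordinates
  below n matter, so that spheres can be treated as compact subsets of a product space.\<close>

definition vdot :: "nat \<Rightarrow> (nat \<Rightarrow> real) \<Rightarrow> (nat \<Rightarrow> real) \<Rightarrow> real" where
  "vdot n x y = (\<Sum>i<n. x i * y i)"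

definition mat_app :: "nat \<Rightarrow> real mat \<Rightarrow> (nat \<Rightarrow> real) \<Rightarrow> nat \<Rightarrow> real" where
  "mat_app n A x i = (\<Sum>j<n. A $$ (i, j) * x j)"

definition qform :: "nat \<Rightarrow> real mat \<Rightarrow> (nat \<Rightarrow> real) \<Rightarrow> real" where
  "qform n A x = vdot n x (mat_app n A x)"

lemma vdot_commute: "vdot n x y = vdot n y x"
  unfolding vdot_def by (simp add: mult.commute)

lemma vdot_lincomb_left:
  "vdot n (\<lambda>i. a * x i + b * y i) z = a * vdot n x z + b * vdot n y z"
  unfolding vdot_def by (simp add: sum.distrib sum_distrib_left algebra_simps)

lemma vdot_lincomb_right:
  "vdot n z (\<lambda>i. a * x i + b * y i) = a * vdot n z x + b * vdot n z y"
  using vdot_lincomb_left[of n a x b y z] by (simp add: vdot_commute)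

lemma vdot_scale_left: "vdot n (\<lambda>i. c * x i) y = c * vdot n x y"
  unfolding vdot_def by (simp add: sum_distrib_left mult.assoc)

lemma vdot_scale_right: "vdot n x (\<lambda>i. c * y i) = c * vdot n x y"
  unfolding vdot_def by (simp add: sum_distrib_left mult.left_commute)

lemma vdot_cong:
  "(\<And>i. i < n \<Longrightarrow> x i = x' i) \<Longrightarrow> (\<And>i. i < n \<Longrightarrow> y i = y' i) \<Longrightarrow> vdot n x y = vdot n x' y'"
  unfolding vdot_def by (intro sum.cong) auto

lemma vdot_self_nonneg: "0 \<le> vdot n x x"
  unfolding vdot_def by (intro sum_nonneg) auto

lemma vdot_self_eq_0D: "vdot n x x = 0 \<Longrightarrow> i < n \<Longrightarrow> x i = 0"
  unfolding vdot_def using sum_nonneg_eq_0_iff[of "{..<n}" "\<lambda>i. x i * x i"] by auto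

lemma square_le_vdot_self: "i < n \<Longrightarrow> x i * x i \<le> vdot n x x"
  unfolding vdot_def by (rule member_le_sum) auto

lemma two_squares_le_vdot_self:
  assumes "i < n" "j < n" "i \<noteq> j"
  shows "x i * x i + x j * x j \<le> vdot n x x"
proof -
  have "x i * x i + x j * x j = (\<Sum>k\<in>{i, j}. x k * x k)" using assms by simp
  also have "\<dots> \<le> (\<Sum>k<n. x k * x k)" using assms by (intro sum_mono2) auto
  finally show ?thesis unfolding vdot_def .
qed

lemma mat_app_lincomb:
  "mat_app n A (\<lambda>i. a * x i + b * y i) = (\<lambda>i. a * mat_app n A x i + b * mat_app n A y i)"
  unfolding mat_app_def by (auto simp: sum.distrib sum_distrib_left algebra_simps)

lemma mat_app_scale: "mat_app n A (\<lambda>i. c * x i) = (\<lambda>i. c * mat_app n A x i)"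
  unfolding mat_app_def by (auto simp: sum_distrib_left mult.left_commute)

lemma qform_expand: "qform n A x = (\<Sum>i<n. \<Sum>j<n. x i * A $$ (i, j) * x j)"
  unfolding qform_def vdot_def mat_app_def by (simp add: sum_distrib_left mult.assoc)

lemma qform_scale: "qform n A (\<lambda>i. c * x i) = c\<^sup>2 * qform n A x"
  unfolding qform_def mat_app_scale vdot_scale_left vdot_scale_right by (simp add: power2_eq_square)

lemma qform_cong: "(\<And>i. i < n \<Longrightarrow> x i = x' i) \<Longrightarrow> qform n A x = qform n A x'"
  unfolding qform_expand by (intro sum.cong) auto

lemma qform_eigenvector:
  "(\<And>i. i < n \<Longrightarrow> mat_app n A x i = c * x i) \<Longrightarrow> qform n A x = c * vdot n x x"
  unfolding qform_def by (subst vdot_cong[of n x x _ "\<lambda>i. c * x i"]) (auto simp: vdot_scale_right)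

lemma symmetric_entry: "A \<in> carrier_mat n n \<Longrightarrow> A\<^sup>T = A \<Longrightarrow> i < n \<Longrightarrow> j < n \<Longrightarrow> A $$ (j, i) = A $$ (i, j)"
  by (metis carrier_matD(1,2) index_transpose_mat(1))

lemma vdot_mat_app_symmetric:
  assumes "A \<in> carrier_mat n n" "A\<^sup>T = A"
  shows "vdot n x (mat_app n A y) = vdot n (mat_app n A x) y"
proof -
  have "vdot n x (mat_app n A y) = (\<Sum>i<n. \<Sum>j<n. x i * A $$ (i, j) * y j)"
    unfolding vdot_def mat_app_def by (simp add: sum_distrib_left mult.assoc)
  also have "\<dots> = (\<Sum>j<n. \<Sum>i<n. x i * A $$ (i, j) * y j)" by (rule sum.swap)
  also have "\<dots> = vdot n (mat_app n A x) y"
    unfolding vdot_def mat_app_def using symmetric_entry[OF assms]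
    by (auto simp: sum_distrib_right intro!: sum.cong)
  finally show ?thesis .
qed

lemma exists_orthogonal_vector:
  fixes vs :: "nat \<Rightarrow> nat \<Rightarrow> real"
  assumes "m < n"
  shows "\<exists>y. (\<forall>j<m. vdot n y (vs j) = 0) \<and> 0 < vdot n y y"
proof -
  define c where "c = (\<lambda>j. vec n (\<lambda>i. if j < m then vs j i else 0))"
  define M where "M = mat\<^sub>r n n (\<lambda>j. if j = m then 0\<^sub>v n else c j)"
  have M: "M \<in> carrier_mat n n" unfolding M_def by auto
  have "det M = 0" unfolding M_def by (rule det_row_0[OF assms]) (auto simp: c_def)
  then obtain v where v: "v \<in> carrier_vec n" "v \<noteq> 0\<^sub>v n" "M *\<^sub>v v = 0\<^sub>v n"
    using det_0_iff_vec_prod_zero[OF M] by auto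
  have "vdot n (\<lambda>i. v $ i) (vs j) = 0" if j: "j < m" for j
  proof -
    have "0 = (M *\<^sub>v v) $ j" using v j assms by auto
    also have "\<dots> = row M j \<bullet> v" using j assms M by auto
    also have "row M j = c j" unfolding M_def using j assms by (auto simp: c_def)
    also have "c j \<bullet> v = (\<Sum>i<n. vs j i * v $ i)"
      using j v unfolding c_def by (auto simp: scalar_prod_def atLeast0LessThan)
    finally show ?thesis unfolding vdot_def by (simp add: mult.commute)
  qed
  moreover have "0 < vdot n (\<lambda>i. v $ i) (\<lambda>i. v $ i)"
  proof -
    obtain i where "i < n" "v $ i \<noteq> 0"
      using v by (metis eq_vecI carrier_vecD index_zero_vec(1,2))
    then have "vdot n (\<lambda>i. v $ i) (\<lambda>i. v $ i) \<noteq> 0" using vdot_self_eq_0D by blast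
    then show ?thesis using vdot_self_nonneg[of n "\<lambda>i. v $ i"] by linarith
  qed
  ultimately show ?thesis by blast
qed

section \<open>Spectral theorem and Courant-Fischer\<close>

lemma continuous_on_coordinate: "continuous_on S (\<lambda>x :: nat \<Rightarrow> real. x i)"
  by (rule continuous_on_subset[OF continuous_on_product_coordinates]) simp

lemma continuous_on_vdot_qform:
  "continuous_on S (\<lambda>x. vdot n x y)" "continuous_on S (\<lambda>x. vdot n x x)"
  "continuous_on S (\<lambda>x. qform n A x)"
  unfolding vdot_def qform_expand
  by (intro continuous_on_sum continuous_on_mult continuous_on_coordinate continuous_on_const)+

definition vnormalize :: "nat \<Rightarrow> (nat \<Rightarrow> real) \<Rightarrow> nat \<Rightarrow> real" where
  "vnormalize n x i = (if i < n then x i / sqrt (vdot n x x) else 0)"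

lemma vdot_vnormalize_left: "vdot n (vnormalize n x) y = vdot n x y / sqrt (vdot n x x)"
  unfolding vdot_def vnormalize_def by (simp add: sum_divide_distrib)

lemma vdot_vnormalize_self:
  assumes "0 < vdot n x x"
  shows "vdot n (vnormalize n x) (vnormalize n x) = 1"
proof -
  have "vdot n (vnormalize n x) (vnormalize n x) = vdot n x (vnormalize n x) / sqrt (vdot n x x)"
    by (rule vdot_vnormalize_left)
  also have "vdot n x (vnormalize n x) = vdot n x x / sqrt (vdot n x x)"
    by (subst vdot_commute) (rule vdot_vnormalize_left)
  finally show ?thesis using assms by (simp add: real_div_sqrt)
qed

lemma qform_vnormalize: "qform n A (vnormalize n x) = qform n A x / vdot n x x"
proof -
  have "qform n A (vnormalize n x) = qform n A (\<lambda>i. (1 / sqrt (vdot n x x)) * x i)"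
    by (rule qform_cong) (simp add: vnormalize_def)
  also have "\<dots> = (1 / sqrt (vdot n x x))\<^sup>2 * qform n A x" by (rule qform_scale)
  also have "\<dots> = qform n A x / vdot n x x" using vdot_self_nonneg[of n x] by (simp add: power_divide)
  finally show ?thesis .
qed

lemma abs_le_1_if_vdot_self_eq_1: "vdot n x x = 1 \<Longrightarrow> i < n \<Longrightarrow> \<bar>x i\<bar> \<le> 1"
  using square_le_vdot_self[of i n x] abs_square_le_1[of "x i"] by (simp add: power2_eq_square)

lemma rayleigh_minimizer_exists:
  fixes vs :: "nat \<Rightarrow> nat \<Rightarrow> real"
  assumes "m < n"
  shows "\<exists>x0. vdot n x0 x0 = 1 \<and> (\<forall>j<m. vdot n x0 (vs j) = 0) \<and>
    (\<forall>x. (\<forall>j<m. vdot n x (vs j) = 0) \<longrightarrow> qform n A x0 * vdot n x x \<le> qform n A x)"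
proof -
  define S where "S = (\<lambda>i. if i < n then {-1..1} else {0 :: real})"
  define K where "K = PiE UNIV S \<inter> {x. vdot n x x = 1} \<inter> (\<Inter>j<m. {x. vdot n x (vs j) = 0})"
  have "compact (PiE UNIV S)"
    using compactin_PiE[of "\<lambda>i. euclidean" UNIV S] by (simp add: euclidean_product_topology S_def)
  moreover have "closed {x. vdot n x x = 1}" "closed (\<Inter>j<m. {x. vdot n x (vs j) = 0})"
    by (intro closed_INT ballI closed_Collect_eq continuous_on_vdot_qform continuous_on_const)+
  ultimately have "compact K" unfolding K_def Int_assoc by (intro compact_Int_closed closed_Int)
  have in_K: "vnormalize n x \<in> K" if x: "\<forall>j<m. vdot n x (vs j) = 0" "0 < vdot n x x" for x
  proof -
    have unit: "vdot n (vnormalize n x) (vnormalize n x) = 1" by (rule vdot_vnormalize_self[OF x(2)])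
    have orth: "\<forall>j<m. vdot n (vnormalize n x) (vs j) = 0"
      using x(1) by (simp add: vdot_vnormalize_left)
    have "vnormalize n x i \<in> S i" for i
    proof (cases "i < n")
      case True
      then show ?thesis using abs_le_1_if_vdot_self_eq_1[OF unit True] unfolding S_def abs_le_iff by simp
    next
      case False
      then show ?thesis by (simp add: S_def vnormalize_def)
    qed
    then show ?thesis using unit orth unfolding K_def by (simp add: PiE_iff)
  qed
  obtain y where "\<forall>j<m. vdot n y (vs j) = 0" "0 < vdot n y y"
    using exists_orthogonal_vector[OF assms] by blast
  then have "K \<noteq> {}" using in_K by blast
  then obtain x0 where x0: "x0 \<in> K" "\<forall>x\<in>K. qform n A x0 \<le> qform n A x"
    using continuous_attains_inf[OF \<open>compact K\<close> _ continuous_on_vdot_qform(3)] by blast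
  have "qform n A x0 * vdot n x x \<le> qform n A x" if x: "\<forall>j<m. vdot n x (vs j) = 0" for x
  proof (cases "0 < vdot n x x")
    case True
    have "qform n A x0 \<le> qform n A x / vdot n x x"
      using bspec[OF x0(2) in_K[OF x True]] unfolding qform_vnormalize .
    then show ?thesis using True by (simp add: pos_le_divide_eq)
  next
    case False
    then have "vdot n x x = 0" using vdot_self_nonneg[of n x] by linarith
    moreover have "qform n A x = 0"
      unfolding qform_expand using vdot_self_eq_0D[OF \<open>vdot n x x = 0\<close>] by simp
    ultimately show ?thesis by simp
  qed
  then show ?thesis using x0(1) unfolding K_def by blast
qed

lemma nonneg_quadratic_imp_linear_coeff_0:
  fixes b c :: real
  assumes "\<And>t. 0 \<le> 2 * t * b + t\<^sup>2 * c"
  shows "b = 0"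
proof -
  define s where "s = \<bar>c\<bar> + 1"
  have "s > 0" by (simp add: s_def)
  have "0 \<le> (2 * (- b / s) * b + (- b / s)\<^sup>2 * c) * s\<^sup>2"
    using assms[of "- b / s"] by simp
  also have "\<dots> = b\<^sup>2 * (c - 2 * s)"
    using \<open>s > 0\<close> by (simp add: field_simps power2_eq_square)
  finally have "0 \<le> b\<^sup>2 * (c - 2 * s)" .
  moreover have "c - 2 * s < 0" unfolding s_def by (smt (verit) abs_ge_self)
  ultimately show ?thesis by (simp add: mult_le_0_iff zero_le_mult_iff)
qed

text \<open>The residual r = A x0 - l x0 is again orthogonal to the eigenvectors vs j, so x0 + t r
  is admissible for every t; the resulting quadratic inequality in t forces |r|^2 = 0.\<close>

lemma rayleigh_minimizer_eigenvector:
  assumes A: "A \<in> carrier_mat n n" "A\<^sup>T = A"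
    and unit: "vdot n x0 x0 = 1" and orth: "\<forall>j<m. vdot n x0 (vs j) = 0"
    and min: "\<forall>x. (\<forall>j<m. vdot n x (vs j) = 0) \<longrightarrow> qform n A x0 * vdot n x x \<le> qform n A x"
    and eigen: "\<forall>j<m. \<forall>i<n. mat_app n A (vs j) i = d j * vs j i"
  shows "\<forall>i<n. mat_app n A x0 i = qform n A x0 * x0 i"
proof -
  define l where "l = qform n A x0"
  define r where "r = (\<lambda>i. 1 * mat_app n A x0 i + (- l) * x0 i)"
  have self_adjoint: "vdot n x (mat_app n A y) = vdot n (mat_app n A x) y" for x y
    by (rule vdot_mat_app_symmetric[OF A])
  have cross: "vdot n x0 (mat_app n A r) = vdot n r (mat_app n A x0)"
    by (subst self_adjoint) (rule vdot_commute)
  have r_orth: "vdot n r (vs j) = 0" if j: "j < m" for j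
  proof -
    have "vdot n (mat_app n A x0) (vs j) = vdot n x0 (\<lambda>i. d j * vs j i)"
      unfolding self_adjoint[symmetric] by (rule vdot_cong) (use eigen j in auto)
    then show ?thesis using orth j unfolding r_def vdot_lincomb_left by (simp add: vdot_scale_right)
  qed
  have "0 \<le> 2 * t * vdot n r r + t\<^sup>2 * (qform n A r - l * vdot n r r)" for t
  proof -
    define x where "x = (\<lambda>i. 1 * x0 i + t * r i)"
    have "\<forall>j<m. vdot n x (vs j) = 0" unfolding x_def vdot_lincomb_left using orth r_orth by simp
    then have admissible: "l * vdot n x x \<le> qform n A x" using min unfolding l_def by blast
    have qform_x: "qform n A x = l + 2 * t * vdot n r (mat_app n A x0) + t\<^sup>2 * qform n A r"
      unfolding qform_def x_def mat_app_lincomb vdot_lincomb_left vdot_lincomb_right l_def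
      by (simp add: qform_def cross power2_eq_square algebra_simps)
    have vdot_x: "vdot n x x = 1 + 2 * t * vdot n r x0 + t\<^sup>2 * vdot n r r"
      unfolding x_def vdot_lincomb_left vdot_lincomb_right using unit
      by (simp add: power2_eq_square algebra_simps vdot_commute[of n r x0])
    have vdot_r: "vdot n r r = vdot n r (mat_app n A x0) - l * vdot n r x0"
      using vdot_lincomb_right[of n r 1 "mat_app n A x0" "- l" x0] unfolding r_def by simp
    have "2 * t * vdot n r r + t\<^sup>2 * (qform n A r - l * vdot n r r) = qform n A x - l * vdot n x x"
      unfolding qform_x vdot_x vdot_r by (simp add: algebra_simps)
    then show ?thesis using admissible by linarith
  qed
  then have "vdot n r r = 0" by (rule nonneg_quadratic_imp_linear_coeff_0)
  then show ?thesis using vdot_self_eq_0D unfolding r_def l_def by fastforce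
qed

definition variational_eigenbasis ::
    "nat \<Rightarrow> real mat \<Rightarrow> nat \<Rightarrow> (nat \<Rightarrow> nat \<Rightarrow> real) \<Rightarrow> (nat \<Rightarrow> real) \<Rightarrow> bool" where
  "variational_eigenbasis n A m v d \<longleftrightarrow>
     (\<forall>k<m. \<forall>l<m. vdot n (v k) (v l) = (if k = l then 1 else 0)) \<and>
     (\<forall>k<m. \<forall>i<n. mat_app n A (v k) i = d k * v k i) \<and>
     (\<forall>k<m. \<forall>x. (\<forall>j<k. vdot n x (v j) = 0) \<longrightarrow> d k * vdot n x x \<le> qform n A x)"

lemma variational_eigenbasisD:
  assumes "variational_eigenbasis n A m v d"
  shows variational_eigenbasis_orthonormal:
      "k < m \<Longrightarrow> l < m \<Longrightarrow> vdot n (v k) (v l) = (if k = l then 1 else 0)"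
    and variational_eigenbasis_eigen: "k < m \<Longrightarrow> i < n \<Longrightarrow> mat_app n A (v k) i = d k * v k i"
    and variational_eigenbasis_min:
      "k < m \<Longrightarrow> (\<And>j. j < k \<Longrightarrow> vdot n x (v j) = 0) \<Longrightarrow> d k * vdot n x x \<le> qform n A x"
  using assms unfolding variational_eigenbasis_def by blast+

lemma variational_eigenbasis_Suc:
  assumes IH: "variational_eigenbasis n A m v d"
    and x0: "vdot n x0 x0 = 1" "\<forall>j<m. vdot n x0 (v j) = 0"
      "\<forall>x. (\<forall>j<m. vdot n x (v j) = 0) \<longrightarrow> qform n A x0 * vdot n x x \<le> qform n A x"
    and x0_eigen: "\<forall>i<n. mat_app n A x0 i = qform n A x0 * x0 i"
  shows "variational_eigenbasis n A (Suc m) (v(m := x0)) (d(m := qform n A x0))"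
proof -
  define v' where "v' = v(m := x0)"
  define d' where "d' = d(m := qform n A x0)"
  have "vdot n (v' k) (v' l) = (if k = l then 1 else 0)" if kl: "k < Suc m" "l < Suc m" for k l
  proof -
    consider "k < m" "l < m" | "k = m" "l < m" | "k < m" "l = m" | "k = m" "l = m"
      using kl by (blast elim: less_SucE)
    then show ?thesis
    proof cases
      case 1
      then show ?thesis using variational_eigenbasis_orthonormal[OF IH] by (simp add: v'_def)
    next
      case 2
      then show ?thesis using x0(2) by (simp add: v'_def)
    next
      case 3
      then show ?thesis using x0(2) vdot_commute[of n "v k" x0] by (simp add: v'_def)
    next
      case 4
      then show ?thesis using x0(1) by (simp add: v'_def)
    qed
  qed
  moreover have "mat_app n A (v' k) i = d' k * v' k i" if "k < Suc m" "i < n" for k i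
    using that variational_eigenbasis_eigen[OF IH] x0_eigen
    by (cases "k = m") (auto simp: v'_def d'_def)
  moreover have "d' k * vdot n x x \<le> qform n A x"
    if "k < Suc m" and orth: "\<forall>j<k. vdot n x (v' j) = 0" for k x
  proof (cases "k = m")
    case True
    then show ?thesis using x0(3) orth by (simp add: v'_def d'_def)
  next
    case False
    then have "k < m" "\<And>j. j < k \<Longrightarrow> vdot n x (v j) = 0" using that by (auto simp: v'_def)
    then show ?thesis using variational_eigenbasis_min[OF IH] False by (simp add: d'_def)
  qed
  ultimately show ?thesis unfolding variational_eigenbasis_def v'_def d'_def by blast
qed

lemma variational_eigenbasis_exists:
  assumes A: "A \<in> carrier_mat n n" "A\<^sup>T = A" and "m \<le> n"
  shows "\<exists>v d. variational_eigenbasis n A m v d"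
  using \<open>m \<le> n\<close>
proof (induction m)
  case 0
  then show ?case by (simp add: variational_eigenbasis_def)
next
  case (Suc m)
  then obtain v d where IH: "variational_eigenbasis n A m v d" by auto
  obtain x0 where x0: "vdot n x0 x0 = 1" "\<forall>j<m. vdot n x0 (v j) = 0"
    "\<forall>x. (\<forall>j<m. vdot n x (v j) = 0) \<longrightarrow> qform n A x0 * vdot n x x \<le> qform n A x"
    using rayleigh_minimizer_exists[of m n v A] Suc.prems by auto
  moreover have "\<forall>i<n. mat_app n A x0 i = qform n A x0 * x0 i"
    using rayleigh_minimizer_eigenvector[OF A x0] variational_eigenbasis_eigen[OF IH] by blast
  ultimately show ?case using variational_eigenbasis_Suc[OF IH] by blast
qed

lemma variational_eigenbasis_mono:
  assumes basis: "variational_eigenbasis n A m v d" and "k \<le> l" "l < m"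
  shows "d k \<le> d l"
proof -
  have "d k * vdot n (v l) (v l) \<le> qform n A (v l)"
    using assms by (intro variational_eigenbasis_min[OF basis])
      (auto simp: variational_eigenbasis_orthonormal[OF basis])
  also have "\<dots> = d l * vdot n (v l) (v l)"
    using assms by (intro qform_eigenvector) (simp add: variational_eigenbasis_eigen[OF basis])
  finally show ?thesis
    using variational_eigenbasis_orthonormal[OF basis \<open>l < m\<close> \<open>l < m\<close>] by simp
qed

lemma char_poly_orthonormal_eigenbasis:
  assumes A: "A \<in> carrier_mat n n"
    and orthonormal: "\<forall>k<n. \<forall>l<n. vdot n (v k) (v l) = (if k = l then 1 else 0)"
    and eigen: "\<forall>k<n. \<forall>i<n. mat_app n A (v k) i = d k * v k i"
  shows "char_poly A = (\<Prod>a\<leftarrow>map d [0..<n]. [:- a, 1:])"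
proof -
  define P where "P = mat n n (\<lambda>(i, k). v k i)"
  define D where "D = mat n n (\<lambda>(i, j). if i = j then d i else 0)"
  have P: "P \<in> carrier_mat n n" "P\<^sup>T \<in> carrier_mat n n" and D: "D \<in> carrier_mat n n"
    unfolding P_def D_def by auto
  have PtP: "P\<^sup>T * P = 1\<^sub>m n"
    by (rule eq_matI)
      (use orthonormal in \<open>auto simp: P_def scalar_prod_def vdot_def atLeast0LessThan\<close>)
  have AP: "A * P = P * D"
  proof (rule eq_matI)
    fix i k assume ik: "i < dim_row (P * D)" "k < dim_col (P * D)"
    have "(A * P) $$ (i, k) = mat_app n A (v k) i"
      using ik A unfolding P_def D_def mat_app_def by (simp add: scalar_prod_def atLeast0LessThan)
    also have "\<dots> = v k i * d k" using eigen ik P D by auto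
    also have "\<dots> = (P * D) $$ (i, k)"
      using ik P D unfolding P_def D_def
      by (simp add: scalar_prod_def if_distrib[of "\<lambda>x. v _ i * x"] sum.delta cong: if_cong)
    finally show "(A * P) $$ (i, k) = (P * D) $$ (i, k)" .
  qed (use A P D in auto)
  have "A = A * (P * P\<^sup>T)" using A mat_mult_left_right_inverse[OF P(2,1) PtP] by simp
  also have "\<dots> = P * D * P\<^sup>T" using A P by (simp add: assoc_mult_mat[symmetric] AP)
  finally have "similar_mat_wit A D P P\<^sup>T"
    unfolding similar_mat_wit_def
    using A P D PtP mat_mult_left_right_inverse[OF P(2,1) PtP] by (auto simp: Let_def)
  then have "char_poly A = char_poly D" by (intro char_poly_similar) (auto simp: similar_mat_def)
  also have "\<dots> = (\<Prod>a\<leftarrow>diag_mat D. [:- a, 1:])"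
    by (rule char_poly_upper_triangular[OF D]) (auto simp: D_def)
  also have "diag_mat D = map d [0..<n]" unfolding diag_mat_def D_def by auto
  finally show ?thesis .
qed

lemma proots_prod_linear_factors: "proots (\<Prod>a\<leftarrow>xs. [:- a, 1:]) = mset (xs :: real list)"
proof (induction xs)
  case Nil
  then show ?case by simp
next
  case (Cons a xs)
  have "proots ([:- a, 1:] * (\<Prod>a\<leftarrow>xs. [:- a, 1:])) = proots [:- a, 1:] + proots (\<Prod>a\<leftarrow>xs. [:- a, 1:])"
    by (rule proots_mult) (auto simp: prod_list_zero_iff)
  then show ?case using Cons.IH by (simp add: proots_linear_factor)
qed

lemma lambda_k_variational_eigenbasis:
  assumes A: "A \<in> carrier_mat n n" and basis: "variational_eigenbasis n A n v d"
    and k: "1 \<le> k" "k \<le> n"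
  shows "lambda_k A k = d (n - k)"
proof -
  have "char_poly A = (\<Prod>a\<leftarrow>map d [0..<n]. [:- a, 1:])"
    using char_poly_orthonormal_eigenbasis[OF A] basis unfolding variational_eigenbasis_def by blast
  then have roots: "proots (char_poly A) = mset (map d [0..<n])"
    by (simp only: proots_prod_linear_factors)
  have "sorted (map d [0..<n])"
    using variational_eigenbasis_mono[OF basis] by (auto simp: sorted_iff_nth_mono)
  then have "sorted_list_of_multiset (proots (char_poly A)) = map d [0..<n]"
    unfolding roots sorted_list_of_multiset_mset by (rule sorted_sort_id)
  then have "eigenvalues_desc A = rev (map d [0..<n])"
    unfolding eigenvalues_desc_def by simp
  then show ?thesis using k unfolding lambda_k_def by (simp add: rev_nth)
qed

lemma courant_fischer_second_smallest_le:
  assumes A: "A \<in> carrier_mat n n" "A\<^sup>T = A" and n: "2 \<le> n"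
    and orthonormal: "vdot n u u = 1" "vdot n w w = 1" "vdot n u w = 0"
    and bound: "\<And>a b. qform n A (\<lambda>i. a * u i + b * w i)
                  \<le> c * vdot n (\<lambda>i. a * u i + b * w i) (\<lambda>i. a * u i + b * w i)"
  shows "lambda_k A (n - 1) \<le> c"
proof -
  obtain v d where basis: "variational_eigenbasis n A n v d"
    using variational_eigenbasis_exists[OF A] by blast
  define \<alpha> where "\<alpha> = vdot n u (v 0)"
  define \<beta> where "\<beta> = vdot n w (v 0)"
  obtain a b where ab: "a * \<alpha> + b * \<beta> = 0" "0 < a\<^sup>2 + b\<^sup>2"
  proof (cases "\<alpha> = 0 \<and> \<beta> = 0")
    case True
    then show ?thesis using that[of 1 0] by simp
  next
    case False
    then show ?thesis using that[of \<beta> "- \<alpha>"] by (auto simp: algebra_simps sum_power2_gt_zero_iff)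
  qed
  define x where "x = (\<lambda>i. a * u i + b * w i)"
  have norm_x: "vdot n x x = a\<^sup>2 + b\<^sup>2"
    unfolding x_def vdot_lincomb_left vdot_lincomb_right orthonormal vdot_commute[of n w u]
    by (simp add: power2_eq_square)
  have "\<forall>j<1. vdot n x (v j) = 0" using ab(1) unfolding x_def vdot_lincomb_left \<alpha>_def \<beta>_def by simp
  then have "d 1 * vdot n x x \<le> qform n A x"
    using variational_eigenbasis_min[OF basis, of 1 x] n by auto
  also have "\<dots> \<le> c * vdot n x x" unfolding x_def by (rule bound)
  finally have "d 1 \<le> c" using ab(2) norm_x by simp
  moreover have "lambda_k A (n - 1) = d 1"
    using lambda_k_variational_eigenbasis[OF A(1) basis, of "n - 1"] n by simp
  ultimately show ?thesis by simp
qed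

lemma courant_fischer_second_smallest_attained:
  assumes A: "A \<in> carrier_mat n n" "A\<^sup>T = A" and n: "2 \<le> n"
  shows "\<exists>u w. vdot n u u = 1 \<and> vdot n w w = 1 \<and> vdot n u w = 0 \<and>
    (\<forall>a b. qform n A (\<lambda>i. a * u i + b * w i)
             \<le> lambda_k A (n - 1) * vdot n (\<lambda>i. a * u i + b * w i) (\<lambda>i. a * u i + b * w i))"
proof -
  obtain v d where basis: "variational_eigenbasis n A n v d"
    using variational_eigenbasis_exists[OF A] by blast
  have \<lambda>: "lambda_k A (n - 1) = d 1"
    using lambda_k_variational_eigenbasis[OF A(1) basis, of "n - 1"] n by simp
  have "d 0 \<le> d 1" using variational_eigenbasis_mono[OF basis, of 0 1] n by simp
  have orthonormal: "vdot n (v 0) (v 0) = 1" "vdot n (v 1) (v 1) = 1"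
    "vdot n (v 0) (v 1) = 0" "vdot n (v 1) (v 0) = 0"
    using variational_eigenbasis_orthonormal[OF basis] n by auto
  have "qform n A (\<lambda>i. a * v 0 i + b * v 1 i)
          \<le> d 1 * vdot n (\<lambda>i. a * v 0 i + b * v 1 i) (\<lambda>i. a * v 0 i + b * v 1 i)" for a b
  proof -
    have "qform n A (\<lambda>i. a * v 0 i + b * v 1 i)
            = vdot n (\<lambda>i. a * v 0 i + b * v 1 i) (\<lambda>i. (a * d 0) * v 0 i + (b * d 1) * v 1 i)"
      unfolding qform_def mat_app_lincomb
      by (rule vdot_cong) (use variational_eigenbasis_eigen[OF basis] n in auto)
    also have "\<dots> = a\<^sup>2 * d 0 + b\<^sup>2 * d 1"
      unfolding vdot_lincomb_left vdot_lincomb_right orthonormal by (simp add: power2_eq_square)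
    also have "\<dots> \<le> a\<^sup>2 * d 1 + b\<^sup>2 * d 1"
      using \<open>d 0 \<le> d 1\<close> by (simp add: mult_left_mono)
    finally show ?thesis
      unfolding vdot_lincomb_left vdot_lincomb_right orthonormal
      by (simp add: power2_eq_square algebra_simps)
  qed
  then show ?thesis using orthonormal(1-3) unfolding \<lambda> by blast
qed

section \<open>Basic solutions of a box-constrained linear system\<close>

definition fractional :: "'a set \<Rightarrow> ('a \<Rightarrow> real) \<Rightarrow> 'a set" where
  "fractional P Y = {p\<in>P. 0 < Y p \<and> Y p < 1}"

lemma exists_kernel_vector:
  fixes c :: "nat \<Rightarrow> 'a \<Rightarrow> real"
  assumes F: "finite F" and card: "m < card F"
  shows "\<exists>D. (\<forall>p. p \<notin> F \<longrightarrow> D p = 0) \<and> (\<forall>j<m. (\<Sum>p\<in>F. D p * c j p) = 0) \<and> (\<exists>p\<in>F. D p \<noteq> 0)"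
proof -
  obtain h where h: "bij_betw h {..<card F} F"
    using ex_bij_betw_nat_finite[OF F] by (auto simp: atLeast0LessThan)
  obtain y where y: "\<forall>j<m. vdot (card F) y (\<lambda>k. c j (h k)) = 0" "0 < vdot (card F) y y"
    using exists_orthogonal_vector[OF card, of "\<lambda>j k. c j (h k)"] by blast
  define D where "D = (\<lambda>p. if p \<in> F then y (inv_into {..<card F} h p) else 0)"
  have D_h: "D (h k) = y k" if "k < card F" for k
    using that h unfolding D_def by (auto simp: bij_betw_def inv_into_f_f)
  have sum_F: "(\<Sum>p\<in>F. D p * g p) = vdot (card F) y (\<lambda>k. g (h k))" for g
    unfolding vdot_def using sum.reindex_bij_betw[OF h, of "\<lambda>p. D p * g p"] D_h by simp
  have "\<exists>p\<in>F. D p \<noteq> 0"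
  proof (rule ccontr)
    assume "\<not> (\<exists>p\<in>F. D p \<noteq> 0)"
    then have "y k = 0" if "k < card F" for k
      using D_h[OF that] bij_betwE[OF h] that by force
    then have "vdot (card F) y y = 0" unfolding vdot_def by simp
    then show False using y(2) by simp
  qed
  then show ?thesis using y(1) sum_F by (intro exI[of _ D]) (auto simp: D_def)
qed

lemma exists_step_to_box_boundary:
  fixes Y D :: "'a \<Rightarrow> real"
  assumes F: "finite F" and Y: "\<forall>p\<in>F. 0 < Y p \<and> Y p < 1" and D: "\<exists>p\<in>F. D p \<noteq> 0"
  shows "\<exists>t. (\<forall>p\<in>F. 0 \<le> Y p + t * D p \<and> Y p + t * D p \<le> 1) \<and>
             (\<exists>p\<in>F. Y p + t * D p = 0 \<or> Y p + t * D p = 1)"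
proof -
  define G where "G = {p\<in>F. D p \<noteq> 0}"
  define h where "h = (\<lambda>p. if D p > 0 then (1 - Y p) / D p else - Y p / D p)"
  have G: "finite G" "G \<noteq> {}" using F D unfolding G_def by auto
  have h_pos: "0 < h p" if "p \<in> G" for p
    using that Y unfolding G_def h_def by (auto simp: divide_pos_neg)
  define t where "t = Min (h ` G)"
  have t_le: "t \<le> h p" if "p \<in> G" for p unfolding t_def using G that by auto
  have "t \<in> h ` G" unfolding t_def using G by (intro Min_in) auto
  then obtain q where q: "q \<in> G" "t = h q" by blast
  have "0 \<le> Y p + t * D p \<and> Y p + t * D p \<le> 1" if p: "p \<in> F" for p
  proof (cases "D p = 0")
    case True
    then show ?thesis using Y p by auto
  next
    case False
    then have "p \<in> G" using p unfolding G_def by simp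
    have "0 < t" using q h_pos by auto
    have "0 < Y p" "Y p < 1" using Y p by auto
    consider "0 < D p" | "D p < 0" using False by linarith
    then show ?thesis
    proof cases
      case 1
      then have "t * D p \<le> h p * D p" using t_le[OF \<open>p \<in> G\<close>] by (simp add: mult_right_mono)
      also have "h p * D p = 1 - Y p" using \<open>0 < D p\<close> unfolding h_def by simp
      finally show ?thesis using \<open>0 < Y p\<close> mult_pos_pos[OF \<open>0 < t\<close> \<open>0 < D p\<close>] by simp
    next
      case 2
      then have "h p * D p \<le> t * D p" using t_le[OF \<open>p \<in> G\<close>] by (simp add: mult_right_mono_neg)
      moreover have "h p * D p = - Y p" using \<open>D p < 0\<close> unfolding h_def by simp
      ultimately show ?thesis using \<open>Y p < 1\<close> mult_pos_neg[OF \<open>0 < t\<close> \<open>D p < 0\<close>] by simp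
    qed
  qed
  moreover have "Y q + t * D q = 0 \<or> Y q + t * D q = 1"
    using q unfolding h_def G_def by (auto split: if_splits)
  ultimately show ?thesis using q(1) unfolding G_def by blast
qed

text \<open>A feasible point with more than m fractional coordinates is not a vertex: moving along
  a kernel direction supported on m + 1 of them until one reaches 0 or 1 keeps it feasible.\<close>

lemma fewer_fractional_solution:
  fixes c :: "nat \<Rightarrow> 'a \<Rightarrow> real"
  assumes P: "finite P" and Y: "\<forall>p\<in>P. 0 \<le> Y p \<and> Y p \<le> 1"
    and many: "m < card (fractional P Y)"
  shows "\<exists>Z. (\<forall>p\<in>P. 0 \<le> Z p \<and> Z p \<le> 1) \<and>
    (\<forall>j<m. (\<Sum>p\<in>P. Z p * c j p) = (\<Sum>p\<in>P. Y p * c j p)) \<and>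
    card (fractional P Z) < card (fractional P Y)"
proof -
  have fin: "finite (fractional P Y)" using P unfolding fractional_def by simp
  obtain F where F: "F \<subseteq> fractional P Y" "card F = Suc m"
    using obtain_subset_with_card_n[of "Suc m" "fractional P Y"] many by auto
  have "finite F" "F \<subseteq> P" using F fin finite_subset unfolding fractional_def by auto
  obtain D where D: "\<forall>p. p \<notin> F \<longrightarrow> D p = 0" "\<forall>j<m. (\<Sum>p\<in>F. D p * c j p) = 0" "\<exists>p\<in>F. D p \<noteq> 0"
    using exists_kernel_vector[OF \<open>finite F\<close>, of m c] F(2) by auto
  have "\<forall>p\<in>F. 0 < Y p \<and> Y p < 1" using F(1) by (auto simp: fractional_def)
  then obtain t where t: "\<forall>p\<in>F. 0 \<le> Y p + t * D p \<and> Y p + t * D p \<le> 1"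
      "\<exists>p\<in>F. Y p + t * D p = 0 \<or> Y p + t * D p = 1"
    using exists_step_to_box_boundary[OF \<open>finite F\<close> _ D(3)] by blast
  define Z where "Z = (\<lambda>p. Y p + t * D p)"
  have "\<forall>p\<in>P. 0 \<le> Z p \<and> Z p \<le> 1" using t(1) Y D(1) unfolding Z_def by (metis add_0_right mult_zero_right)
  moreover have "(\<Sum>p\<in>P. Z p * c j p) = (\<Sum>p\<in>P. Y p * c j p)" if "j < m" for j
  proof -
    have "(\<Sum>p\<in>P. D p * c j p) = (\<Sum>p\<in>F. D p * c j p)"
      using P \<open>F \<subseteq> P\<close> D(1) by (intro sum.mono_neutral_right) auto
    then show ?thesis using D(2) that unfolding Z_def
      by (simp add: distrib_right sum.distrib sum_distrib_left[symmetric] mult.assoc)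
  qed
  moreover have "card (fractional P Z) < card (fractional P Y)"
  proof -
    obtain q where q: "q \<in> F" "Z q = 0 \<or> Z q = 1" using t(2) unfolding Z_def by blast
    have "fractional P Z \<subseteq> fractional P Y - {q}"
      using F(1) q D(1) unfolding fractional_def Z_def by auto
    moreover have "q \<in> fractional P Y" using q F(1) by auto
    ultimately show ?thesis using fin by (meson card_Diff1_less card_mono finite_Diff le_less_trans)
  qed
  ultimately show ?thesis by blast
qed

lemma box_solution_few_fractional:
  fixes c :: "nat \<Rightarrow> 'a \<Rightarrow> real"
  assumes P: "finite P" and X: "\<forall>p\<in>P. 0 \<le> X p \<and> X p \<le> 1"
  shows "\<exists>Y. (\<forall>p\<in>P. 0 \<le> Y p \<and> Y p \<le> 1) \<and>
    (\<forall>j<m. (\<Sum>p\<in>P. Y p * c j p) = (\<Sum>p\<in>P. X p * c j p)) \<and> card (fractional P Y) \<le> m"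
proof -
  define feasible where "feasible Y \<longleftrightarrow> (\<forall>p\<in>P. 0 \<le> Y p \<and> Y p \<le> 1) \<and>
    (\<forall>j<m. (\<Sum>p\<in>P. Y p * c j p) = (\<Sum>p\<in>P. X p * c j p))" for Y
  obtain Y where Y: "feasible Y" and least: "\<And>Z. feasible Z \<Longrightarrow> card (fractional P Y) \<le> card (fractional P Z)"
    using ex_has_least_nat[of feasible X "\<lambda>Y. card (fractional P Y)"] X
    unfolding feasible_def by blast
  have "card (fractional P Y) \<le> m"
  proof (rule ccontr)
    assume "\<not> card (fractional P Y) \<le> m"
    then obtain Z where "feasible Z" "card (fractional P Z) < card (fractional P Y)"
      using fewer_fractional_solution[OF P, of Y m c] Y unfolding feasible_def by auto
    then show False using least by fastforce
  qed
  then show ?thesis using Y unfolding feasible_def by blast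
qed

section \<open>Edge forms\<close>

definition upper_pairs :: "nat \<Rightarrow> (nat \<times> nat) set" where
  "upper_pairs n = {(i, j). i < j \<and> j < n}"

definition pair_coef :: "(nat \<Rightarrow> real) \<Rightarrow> (nat \<Rightarrow> real) \<Rightarrow> nat \<times> nat \<Rightarrow> real" where
  "pair_coef x y p = x (fst p) * y (snd p) + x (snd p) * y (fst p)"

text \<open>\<open>edge_form n x y Y\<close> is x^T M y for the loopless symmetric matrix M with M_ij = Y (i, j)
  for i < j; it is linear in the edge weights Y.\<close>

definition edge_form ::
    "nat \<Rightarrow> (nat \<Rightarrow> real) \<Rightarrow> (nat \<Rightarrow> real) \<Rightarrow> (nat \<times> nat \<Rightarrow> real) \<Rightarrow> real" where
  "edge_form n x y Y = (\<Sum>p\<in>upper_pairs n. Y p * pair_coef x y p)"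

lemma finite_upper_pairs [simp]: "finite (upper_pairs n)"
  by (rule finite_subset[of _ "{..<n} \<times> {..<n}"]) (auto simp: upper_pairs_def)

lemma upper_pairs_Suc: "upper_pairs (Suc n) = upper_pairs n \<union> (\<lambda>i. (i, n)) ` {..<n}"
  unfolding upper_pairs_def by auto

lemma sum_square_upper_pairs:
  "(\<Sum>i<n. \<Sum>j<n. f i j) = (\<Sum>i<n. f i i) + (\<Sum>p\<in>upper_pairs n. f (fst p) (snd p) + f (snd p) (fst p))"
proof (induction n)
  case 0
  then show ?case by (simp add: upper_pairs_def)
next
  case (Suc n)
  have "upper_pairs n \<inter> (\<lambda>i. (i, n)) ` {..<n} = {}" by (auto simp: upper_pairs_def)
  then have "(\<Sum>p\<in>upper_pairs (Suc n). f (fst p) (snd p) + f (snd p) (fst p)) =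
        (\<Sum>p\<in>upper_pairs n. f (fst p) (snd p) + f (snd p) (fst p)) + (\<Sum>i<n. f i n + f n i)"
    unfolding upper_pairs_Suc by (subst sum.union_disjoint) (auto simp: sum.reindex inj_on_def)
  moreover have "(\<Sum>i<Suc n. \<Sum>j<Suc n. f i j)
      = (\<Sum>i<n. \<Sum>j<n. f i j) + (\<Sum>i<n. f i n + f n i) + f n n"
    by (simp add: sum.distrib algebra_simps)
  ultimately show ?case using Suc by (simp add: algebra_simps)
qed

lemma qform_eq_edge_form:
  assumes "A \<in> carrier_mat n n" "A\<^sup>T = A"
  shows "qform n A x = edge_form n x x (\<lambda>p. A $$ p) + (\<Sum>i<n. A $$ (i, i) * (x i * x i))"
proof -
  have "qform n A x = (\<Sum>i<n. x i * A $$ (i, i) * x i) +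
     (\<Sum>p\<in>upper_pairs n. x (fst p) * A $$ (fst p, snd p) * x (snd p)
                        + x (snd p) * A $$ (snd p, fst p) * x (fst p))"
    unfolding qform_expand by (rule sum_square_upper_pairs)
  also have "(\<Sum>p\<in>upper_pairs n. x (fst p) * A $$ (fst p, snd p) * x (snd p)
                               + x (snd p) * A $$ (snd p, fst p) * x (fst p))
     = edge_form n x x (\<lambda>p. A $$ p)"
    unfolding edge_form_def pair_coef_def using symmetric_entry[OF assms]
    by (intro sum.cong) (auto simp: upper_pairs_def algebra_simps)
  finally show ?thesis by (simp add: algebra_simps)
qed

lemma edge_form_lincomb_self:
  "edge_form n (\<lambda>i. a * u i + b * w i) (\<lambda>i. a * u i + b * w i) Y =
     a\<^sup>2 * edge_form n u u Y + 2 * a * b * edge_form n u w Y + b\<^sup>2 * edge_form n w w Y"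
proof -
  have "Y p * pair_coef (\<lambda>i. a * u i + b * w i) (\<lambda>i. a * u i + b * w i) p =
        a\<^sup>2 * (Y p * pair_coef u u p) + 2 * a * b * (Y p * pair_coef u w p)
          + b\<^sup>2 * (Y p * pair_coef w w p)" for p
    unfolding pair_coef_def by (simp add: algebra_simps power2_eq_square)
  then show ?thesis unfolding edge_form_def by (simp add: sum.distrib sum_distrib_left)
qed

lemma edge_form_cong:
  "(\<And>p. p \<in> upper_pairs n \<Longrightarrow> Y p = Y' p) \<Longrightarrow> edge_form n x y Y = edge_form n x y Y'"
  unfolding edge_form_def by (intro sum.cong) auto

lemma abs_pair_coef_self_le:
  assumes "p \<in> upper_pairs n"
  shows "\<bar>pair_coef x x p\<bar> \<le> vdot n x x"
proof -
  obtain i j where p: "p = (i, j)" "i < j" "j < n" using assms unfolding upper_pairs_def by auto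
  have "\<bar>pair_coef x x p\<bar> = 2 * \<bar>x i * x j\<bar>" unfolding pair_coef_def p by (simp add: abs_mult)
  also have "\<dots> \<le> x i * x i + x j * x j"
    using sum_squares_bound[of "x i" "x j"] sum_squares_bound[of "x i" "- x j"]
    by (simp add: abs_if power2_eq_square)
  also have "\<dots> \<le> vdot n x x" using p by (intro two_squares_le_vdot_self) auto
  finally show ?thesis .
qed

section \<open>Rounding a weighted graph on a plane\<close>

definition graph_of_edges :: "nat \<Rightarrow> (nat \<times> nat \<Rightarrow> real) \<Rightarrow> real mat" where
  "graph_of_edges n R = mat n n (\<lambda>(i, j). if i = j then 0 else R (min i j, max i j))"

lemma graph_of_edges_carrier: "graph_of_edges n R \<in> carrier_mat n n"
  unfolding graph_of_edges_def by simp

lemma graph_of_edges_symmetric: "(graph_of_edges n R)\<^sup>T = graph_of_edges n R"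
  by (rule eq_matI) (auto simp: graph_of_edges_def min.commute max.commute)

lemma graph_of_edges_simple:
  "(\<And>p. R p = 0 \<or> R p = 1) \<Longrightarrow> graph_of_edges n R \<in> simple_graphs n"
  unfolding simple_graphs_def using graph_of_edges_carrier graph_of_edges_symmetric
  by (auto simp: graph_of_edges_def)

lemma qform_graph_of_edges: "qform n (graph_of_edges n R) x = edge_form n x x R"
proof -
  have "edge_form n x x (\<lambda>p. graph_of_edges n R $$ p) = edge_form n x x R"
    by (rule edge_form_cong) (auto simp: graph_of_edges_def upper_pairs_def)
  then show ?thesis
    using qform_eq_edge_form[OF graph_of_edges_carrier graph_of_edges_symmetric, of n R x]
    by (simp add: graph_of_edges_def)
qed

lemma edge_form_round_down:
  assumes Y: "\<forall>p\<in>upper_pairs n. 0 \<le> Y p \<and> Y p \<le> 1"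
  shows "edge_form n x x (\<lambda>p. if Y p = 1 then 1 else 0)
           \<le> edge_form n x x Y + card (fractional (upper_pairs n) Y) * vdot n x x"
proof -
  define F where "F = fractional (upper_pairs n) Y"
  define D where "D = (\<lambda>p. if p \<in> F then - Y p else 0)"
  have "edge_form n x x (\<lambda>p. if Y p = 1 then 1 else 0) = edge_form n x x (\<lambda>p. Y p + D p)"
    by (rule edge_form_cong) (use Y in \<open>force simp: D_def F_def fractional_def\<close>)
  also have "\<dots> = edge_form n x x Y + (\<Sum>p\<in>F. D p * pair_coef x x p)"
  proof -
    have "(\<Sum>p\<in>upper_pairs n. D p * pair_coef x x p) = (\<Sum>p\<in>F. D p * pair_coef x x p)"
      by (rule sum.mono_neutral_right) (auto simp: D_def F_def fractional_def)
    then show ?thesis unfolding edge_form_def by (simp add: distrib_right sum.distrib)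
  qed
  also have "(\<Sum>p\<in>F. D p * pair_coef x x p) \<le> (\<Sum>p\<in>F. vdot n x x)"
  proof (rule sum_mono)
    fix p assume p: "p \<in> F"
    then have "\<bar>D p\<bar> \<le> 1" "\<bar>pair_coef x x p\<bar> \<le> vdot n x x"
      using abs_pair_coef_self_le[of p n x] unfolding D_def F_def fractional_def by auto
    then have "\<bar>D p * pair_coef x x p\<bar> \<le> 1 * vdot n x x"
      unfolding abs_mult by (intro mult_mono) auto
    then show "D p * pair_coef x x p \<le> vdot n x x" by simp
  qed
  finally show ?thesis by (simp add: F_def)
qed

lemma card_upper_pairs_subset_le_two_sqrt:
  assumes n: "2 \<le> n" and F: "F \<subseteq> upper_pairs n" "card F \<le> 3"
  shows "real (card F) \<le> 2 * sqrt (real n)"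
proof (cases "n = 2")
  case True
  then have "F \<subseteq> {(0, 1)}" using F(1) unfolding upper_pairs_def by auto
  then have "card F \<le> 1" using card_mono[of "{(0::nat, 1::nat)}" F] by simp
  moreover have "1 \<le> sqrt (real n)" using n by simp
  ultimately show ?thesis by linarith
next
  case False
  then have "(3 / 2)\<^sup>2 \<le> real n" using n by (simp add: power2_eq_square)
  then have "3 / 2 \<le> sqrt (real n)" by (rule real_le_rsqrt)
  then show ?thesis using F(2) by simp
qed

lemma edge_weights_few_fractional:
  assumes X: "\<forall>p\<in>upper_pairs n. 0 \<le> X p \<and> X p \<le> 1"
  shows "\<exists>Y. (\<forall>p\<in>upper_pairs n. 0 \<le> Y p \<and> Y p \<le> 1) \<and> card (fractional (upper_pairs n) Y) \<le> 3 \<and>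
    (\<forall>a b. edge_form n (\<lambda>i. a * u i + b * w i) (\<lambda>i. a * u i + b * w i) Y
           = edge_form n (\<lambda>i. a * u i + b * w i) (\<lambda>i. a * u i + b * w i) X)"
proof -
  define c where "c = (\<lambda>j :: nat. if j = 0 then pair_coef u u else if j = 1 then pair_coef u w else pair_coef w w)"
  obtain Y where Y: "\<forall>p\<in>upper_pairs n. 0 \<le> Y p \<and> Y p \<le> 1"
      "\<forall>j<3. (\<Sum>p\<in>upper_pairs n. Y p * c j p) = (\<Sum>p\<in>upper_pairs n. X p * c j p)"
      "card (fractional (upper_pairs n) Y) \<le> 3"
    using box_solution_few_fractional[OF finite_upper_pairs X, where m = 3 and c = c] by blast
  have "edge_form n u u Y = edge_form n u u X" "edge_form n u w Y = edge_form n u w X"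
      "edge_form n w w Y = edge_form n w w X"
    using Y(2)[rule_format, of 0] Y(2)[rule_format, of 1] Y(2)[rule_format, of 2]
    unfolding edge_form_def c_def by simp_all
  then show ?thesis using Y(1,3) by (intro exI[of _ Y]) (simp add: edge_form_lincomb_self)
qed

lemma simple_graph_close_on_plane:
  assumes n: "2 \<le> n" and W: "W \<in> weighted_graphs n"
  shows "\<exists>G\<in>simple_graphs n. \<forall>a b. qform n G (\<lambda>i. a * u i + b * w i) \<le>
    qform n W (\<lambda>i. a * u i + b * w i)
      + 2 * sqrt (real n) * vdot n (\<lambda>i. a * u i + b * w i) (\<lambda>i. a * u i + b * w i)"
proof -
  have W_sym: "W \<in> carrier_mat n n" "W\<^sup>T = W"
    and W_entries: "\<forall>i<n. \<forall>j<n. 0 \<le> W $$ (i, j) \<and> W $$ (i, j) \<le> 1"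
    using W unfolding weighted_graphs_def by auto
  then have "\<forall>p\<in>upper_pairs n. 0 \<le> W $$ p \<and> W $$ p \<le> 1" by (auto simp: upper_pairs_def)
  then obtain Y where Y: "\<forall>p\<in>upper_pairs n. 0 \<le> Y p \<and> Y p \<le> 1"
      "card (fractional (upper_pairs n) Y) \<le> 3"
      "\<forall>a b. edge_form n (\<lambda>i. a * u i + b * w i) (\<lambda>i. a * u i + b * w i) Y
           = edge_form n (\<lambda>i. a * u i + b * w i) (\<lambda>i. a * u i + b * w i) (\<lambda>p. W $$ p)"
    using edge_weights_few_fractional by blast
  define G where "G = graph_of_edges n (\<lambda>p. if Y p = 1 then 1 else 0)"
  have "G \<in> simple_graphs n" unfolding G_def by (rule graph_of_edges_simple) simp
  moreover have "qform n G x \<le> qform n W x + 2 * sqrt (real n) * vdot n x x"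
    if x: "x = (\<lambda>i. a * u i + b * w i)" for x a b
  proof -
    have "real (card (fractional (upper_pairs n) Y)) \<le> 2 * sqrt (real n)"
      using Y(2) n by (intro card_upper_pairs_subset_le_two_sqrt) (auto simp: fractional_def)
    then have "card (fractional (upper_pairs n) Y) * vdot n x x \<le> 2 * sqrt (real n) * vdot n x x"
      using vdot_self_nonneg by (intro mult_right_mono) auto
    moreover have "0 \<le> (\<Sum>i<n. W $$ (i, i) * (x i * x i))"
      using W_entries by (intro sum_nonneg) auto
    moreover have "edge_form n x x Y = edge_form n x x (\<lambda>p. W $$ p)" using Y(3) unfolding x by blast
    ultimately show ?thesis
      using edge_form_round_down[OF Y(1), of x] qform_eq_edge_form[OF W_sym, of x]
      unfolding G_def qform_graph_of_edges by linarith
  qed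
  ultimately show ?thesis by blast
qed

lemma exists_simple_graph_lambda_close:
  assumes n: "2 \<le> n" and W: "W \<in> weighted_graphs n"
  shows "\<exists>G\<in>simple_graphs n. lambda_k G (n - 1) \<le> lambda_k W (n - 1) + 2 * sqrt (real n)"
proof -
  have W_sym: "W \<in> carrier_mat n n" "W\<^sup>T = W" using W unfolding weighted_graphs_def by auto
  obtain u w where uw: "vdot n u u = 1" "vdot n w w = 1" "vdot n u w = 0"
    and W_bound: "\<forall>a b. qform n W (\<lambda>i. a * u i + b * w i)
             \<le> lambda_k W (n - 1) * vdot n (\<lambda>i. a * u i + b * w i) (\<lambda>i. a * u i + b * w i)"
    using courant_fischer_second_smallest_attained[OF W_sym n] by blast
  obtain G where G: "G \<in> simple_graphs n" and G_bound: "\<forall>a b. qform n G (\<lambda>i. a * u i + b * w i) \<le>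
      qform n W (\<lambda>i. a * u i + b * w i)
        + 2 * sqrt (real n) * vdot n (\<lambda>i. a * u i + b * w i) (\<lambda>i. a * u i + b * w i)"
    using simple_graph_close_on_plane[OF n W] by blast
  have G_sym: "G \<in> carrier_mat n n" "G\<^sup>T = G" using G unfolding simple_graphs_def by auto
  have "lambda_k G (n - 1) \<le> lambda_k W (n - 1) + 2 * sqrt (real n)"
  proof (rule courant_fischer_second_smallest_le[OF G_sym n uw])
    fix a b
    show "qform n G (\<lambda>i. a * u i + b * w i) \<le> (lambda_k W (n - 1) + 2 * sqrt (real n))
        * vdot n (\<lambda>i. a * u i + b * w i) (\<lambda>i. a * u i + b * w i)"
      using G_bound[rule_format, of a b] W_bound[rule_format, of a b]
      unfolding distrib_right by linarith
  qed
  then show ?thesis using G by blast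
qed

lemma finite_simple_graphs: "finite (simple_graphs n)"
proof -
  let ?I = "{..<n} \<times> {..<n}"
  have "simple_graphs n \<subseteq> (\<lambda>f. mat n n f) ` (?I \<rightarrow>\<^sub>E {0, 1})"
  proof
    fix G assume G: "G \<in> simple_graphs n"
    then have "restrict (\<lambda>p. G $$ p) ?I \<in> ?I \<rightarrow>\<^sub>E {0, 1}" "G = mat n n (restrict (\<lambda>p. G $$ p) ?I)"
      unfolding simple_graphs_def by (auto intro!: eq_matI)
    then show "G \<in> (\<lambda>f. mat n n f) ` (?I \<rightarrow>\<^sub>E {0, 1})" by blast
  qed
  moreover have "finite (?I \<rightarrow>\<^sub>E {0 :: real, 1})" by (intro finite_PiE) auto
  ultimately show ?thesis using finite_subset by blast
qed

theorem theorem1p7: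
  fixes n :: nat
  assumes "n \<ge> 2"
  shows "Min ((\<lambda>G. lambda_k G (n - 1)) ` simple_graphs n) - 2 * sqrt (real n)
           \<le> (INF W \<in> weighted_graphs n. lambda_k W (n - 1))"
proof (rule cINF_greatest)
  show "weighted_graphs n \<noteq> {}"
    unfolding weighted_graphs_def by (auto intro!: exI[of _ "0\<^sub>m n n"])
next
  fix W assume "W \<in> weighted_graphs n"
  then obtain G where "G \<in> simple_graphs n"
      and "lambda_k G (n - 1) \<le> lambda_k W (n - 1) + 2 * sqrt (real n)"
    using exists_simple_graph_lambda_close[OF assms] by blast
  moreover have "Min ((\<lambda>G. lambda_k G (n - 1)) ` simple_graphs n) \<le> lambda_k G (n - 1)"
    using \<open>G \<in> simple_graphs n\<close> finite_simple_graphs by (intro Min_le) auto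
  ultimately show "Min ((\<lambda>G. lambda_k G (n - 1)) ` simple_graphs n) - 2 * sqrt (real n)
      \<le> lambda_k W (n - 1)"
    by linarith
qed

end
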